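(* Let $K\subset\mathbb{R}^k$ be a convex body symmetric about the origin and let $E(K)$ be the maximum volume ellipsoid contained in $K$. For a vector $\bm{u}$ on the boundary of $E(K)$, let $K'=\mathrm{conv}(K,2\sqrt{k}\bm{u},-2\sqrt{k}\bm{u})$. Then $\frac{\mathrm{vol}(E(K'))}{\mathrm{vol}(E(K))}\ge\frac{13}{10}$.
   Context: $\mathrm{conv}$ denotes convex hull, $\mathrm{vol}$ the $k$-dimensional volume, and $E(\cdot)$ the maximum-volume ellipsoid contained in a convex body. *)

theory Defs
  imports "HOL-Analysis.Analysis"
begin

definition convex_body :: "'a::euclidean_space set \<Rightarrow> bool" where
  "convex_body K \<longleftrightarrow> compact K \<and> convex K \<and> interior K \<noteq> {}"

definition origin_symmetric :: "'a::euclidean_space set \<Rightarrow> bool" where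
  "origin_symmetric K \<longleftrightarrow> (\<forall>x\<in>K. - x \<in> K)"

definition is_ellipsoid :: "'a::euclidean_space set \<Rightarrow> bool" where
  "is_ellipsoid E \<longleftrightarrow> (\<exists>c A. linear A \<and> inj A \<and> E = (\<lambda>x. c + A x) ` (cball 0 1 :: 'a set))"

definition vol :: "'a::euclidean_space set \<Rightarrow> real" where
  "vol S = measure lebesgue S"

definition max_vol_ellipsoid :: "'a::euclidean_space set \<Rightarrow> 'a set \<Rightarrow> bool" where
  "max_vol_ellipsoid K E \<longleftrightarrow> is_ellipsoid E \<and> E \<subseteq> K \<and>
     (\<forall>F. is_ellipsoid F \<and> F \<subseteq> K \<longrightarrow> vol F \<le> vol E)"

end

(*
  If the centre c = A c' of E were not 0, then E and -E both lie in K, and averaging them gives the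
  ellipsoid x -> A x + (x . w) c (w = c' / |c'|) inside K, whose volume is (1 + |c'|) vol E; hence
  E = A B for the unit ball B and a linear A. Write u = A w with |w| = 1 and L = 2 sqrt k.
  Stretching B by 2 along w and by b = sqrt ((4k - 4) / (4k - 1)) orthogonally to w gives an
  ellipsoid inside conv (B, L w, -L w): points with |2 L (x . w)| <= 1 stay in B, and the others lie
  in the cone over B with apex L w or -L w, since b^2 (L^2 - 1) = L^2 - 4 makes the stretched ball
  tangent to these cones. Its image under A lies in K' and has volume 2 b^(k-1) vol E, and
  2 b^(k-1) >= 2 exp (-3/8) > 13/10.
*)

theory Submission
  imports Defs
begin

lemma compact_linear_image:
  fixes f :: "'a::euclidean_space \<Rightarrow> 'b::euclidean_space"
  shows "linear f \<Longrightarrow> compact S \<Longrightarrow> compact (f ` S)"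
  by (simp add: compact_continuous_image linear_continuous_on linear_conv_bounded_linear)

(* Volumes of linear images are available in the library only on real^'n with a finite,
   well-ordered index type, so 'a is transported to real^('a basis_index) along its basis. *)
typedef (overloaded) 'a basis_index = "Basis :: 'a::euclidean_space set"
  using nonempty_Basis by blast

instance basis_index :: (euclidean_space) finite
proof
  show "finite (UNIV :: 'a basis_index set)"
    unfolding type_definition.Abs_image[OF type_definition_basis_index, symmetric] by simp
qed

instantiation basis_index :: (euclidean_space) linorder
begin
definition less_eq_basis_index :: "'a basis_index \<Rightarrow> 'a basis_index \<Rightarrow> bool"
  where "less_eq_basis_index x y \<longleftrightarrow> to_nat x \<le> to_nat y"
definition less_basis_index :: "'a basis_index \<Rightarrow> 'a basis_index \<Rightarrow> bool"
  where "less_basis_index x y \<longleftrightarrow> to_nat x < to_nat y"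
instance
proof
  fix x y z :: "'a basis_index"
  show "x < y \<longleftrightarrow> x \<le> y \<and> \<not> y \<le> x"
    unfolding less_eq_basis_index_def less_basis_index_def by linarith
  show "x \<le> x" unfolding less_eq_basis_index_def by simp
  show "x \<le> y \<Longrightarrow> y \<le> z \<Longrightarrow> x \<le> z" unfolding less_eq_basis_index_def by linarith
  show "x \<le> y \<Longrightarrow> y \<le> x \<Longrightarrow> x = y"
    unfolding less_eq_basis_index_def using injD[OF inj_to_nat, of x y] by linarith
  show "x \<le> y \<or> y \<le> x" unfolding less_eq_basis_index_def by linarith
qed
end

instance basis_index :: (euclidean_space) wellorder
proof
  fix P :: "'a basis_index \<Rightarrow> bool" and a
  assume step: "\<And>x. (\<And>y. y < x \<Longrightarrow> P y) \<Longrightarrow> P x"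
  show "P a"
  proof (induction a rule: measure_induct_rule[of to_nat])
    case (less x)
    then show ?case by (rule step) (simp add: less_basis_index_def)
  qed
qed

lemma bij_betw_Rep_basis_index: "bij_betw Rep_basis_index UNIV Basis"
  by (simp add: bij_betw_def inj_on_def Rep_basis_index_inject
      type_definition.Rep_range[OF type_definition_basis_index])

definition to_vec :: "'a::euclidean_space \<Rightarrow> real^'a basis_index" where
  "to_vec x = (\<chi> i. x \<bullet> Rep_basis_index i)"

definition of_vec :: "real^'a basis_index \<Rightarrow> 'a::euclidean_space" where
  "of_vec v = (\<Sum>i\<in>UNIV. v $ i *\<^sub>R Rep_basis_index i)"

lemma inner_of_vec_Rep: "of_vec v \<bullet> Rep_basis_index j = v $ j"
proof -
  have "of_vec v \<bullet> Rep_basis_index j = (\<Sum>i\<in>UNIV. if i = j then v $ i else 0)"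
    unfolding of_vec_def inner_sum_left
    by (intro sum.cong) (auto simp: inner_Basis Rep_basis_index Rep_basis_index_inject)
  then show ?thesis by simp
qed

lemma of_vec_to_vec [simp]: "of_vec (to_vec x) = x"
  using sum.reindex_bij_betw[OF bij_betw_Rep_basis_index, of "\<lambda>b. (x \<bullet> b) *\<^sub>R b"]
  by (simp add: of_vec_def to_vec_def euclidean_representation)

lemma linear_to_vec: "linear to_vec"
  by (rule linearI) (auto simp: to_vec_def vec_eq_iff inner_add_left)

lemma linear_of_vec: "linear of_vec"
  by (rule linearI) (auto simp: of_vec_def scaleR_add_left sum.distrib scaleR_sum_right)

lemma Basis_eq_range_Rep: "Basis = range Rep_basis_index"
  by (simp add: type_definition.Rep_range[OF type_definition_basis_index])

lemma vimage_to_vec_box: "to_vec -` box l u = box (of_vec l) (of_vec u)"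
  by (simp add: set_eq_iff mem_box_cart mem_box to_vec_def inner_of_vec_Rep Basis_eq_range_Rep)

lemma borel_measurable_to_vec: "to_vec \<in> borel_measurable borel"
  by (intro borel_measurable_continuous_onI linear_continuous_on)
     (simp add: linear_to_vec flip: linear_conv_bounded_linear)

lemma distr_lborel_to_vec: "distr lborel borel (to_vec :: 'a::euclidean_space \<Rightarrow> _) = lborel"
proof (rule lborel_eqI[symmetric])
  fix l u :: "real^'a basis_index"
  assume "\<And>b. b \<in> Basis \<Longrightarrow> l \<bullet> b \<le> u \<bullet> b"
  then have le: "l $ i \<le> u $ i" for i
    by (auto simp: Basis_vec_def cart_eq_inner_axis)
  have "emeasure (distr lborel borel to_vec) (box l u) = emeasure lborel (box (of_vec l) (of_vec u :: 'a))"
    by (simp add: emeasure_distr borel_measurable_to_vec vimage_to_vec_box)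
  also have "\<dots> = (\<Prod>b\<in>Basis. (of_vec u - of_vec l :: 'a) \<bullet> b)"
    using le by (simp add: emeasure_lborel_box_eq inner_diff_left inner_of_vec_Rep Basis_eq_range_Rep)
  also have "\<dots> = (\<Prod>i\<in>UNIV. (u - l) $ i)"
    using prod.reindex_bij_betw[OF bij_betw_Rep_basis_index, of "\<lambda>b. (of_vec u - of_vec l :: 'a) \<bullet> b"]
    by (simp add: inner_diff_left inner_of_vec_Rep)
  also have "\<dots> = (\<Prod>b\<in>Basis. (u - l) \<bullet> b)"
  proof -
    have "(Basis :: (real^'a basis_index) set) = range (\<lambda>i. axis i 1)"
      by (auto simp: Basis_vec_def)
    then show ?thesis
      using prod.reindex[of "\<lambda>i. axis i 1" UNIV "\<lambda>b. (u - l) \<bullet> b"]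
      by (simp add: inj_on_def axis_eq_axis inner_axis)
  qed
  finally show "emeasure (distr lborel borel to_vec) (box l u) = (\<Prod>b\<in>Basis. (u - l) \<bullet> b)" .
qed simp

lemma measure_to_vec_image:
  fixes S :: "'a::euclidean_space set"
  assumes "compact S"
  shows "measure lebesgue (to_vec ` S) = measure lebesgue S"
proof -
  have "to_vec ` S \<in> sets borel"
    using assms by (intro borel_compact compact_linear_image linear_to_vec)
  then have "measure lebesgue (to_vec ` S) = measure (distr lborel borel to_vec) (to_vec ` S)"
    by (simp add: distr_lborel_to_vec measure_completion)
  also have "\<dots> = measure lborel (to_vec -` to_vec ` S)"
    using \<open>to_vec ` S \<in> sets borel\<close> by (simp add: measure_distr borel_measurable_to_vec)
  also have "to_vec -` to_vec ` S = S"
    by (metis of_vec_to_vec inj_on_inverseI inj_vimage_image_eq)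
  finally show ?thesis
    using assms by (simp add: borel_compact measure_completion)
qed

lemma measure_linear_image_proportional:
  fixes f :: "'a::euclidean_space \<Rightarrow> 'a"
  assumes "linear f"
  obtains c where "\<And>S. compact S \<Longrightarrow> measure lebesgue (f ` S) = c * measure lebesgue S"
proof
  let ?g = "to_vec \<circ> f \<circ> of_vec"
  fix S :: "'a set"
  assume "compact S"
  have "measure lebesgue (f ` S) = measure lebesgue (?g ` to_vec ` S)"
    using measure_to_vec_image[OF compact_linear_image[OF assms \<open>compact S\<close>]]
    by (simp add: image_comp)
  also have "\<dots> = \<bar>det (matrix ?g)\<bar> * measure lebesgue (to_vec ` S)"
    using assms \<open>compact S\<close>
    by (intro measure_linear_image lmeasurable_compact compact_linear_image linear_compose
        linear_to_vec linear_of_vec)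
  also have "\<dots> = \<bar>det (matrix ?g)\<bar> * measure lebesgue S"
    by (simp add: measure_to_vec_image \<open>compact S\<close>)
  finally show "measure lebesgue (f ` S) = \<bar>det (matrix ?g)\<bar> * measure lebesgue S" .
qed

definition volume_factor :: "('a::euclidean_space \<Rightarrow> 'a) \<Rightarrow> real" where
  "volume_factor f = measure lebesgue (f ` cbox 0 One)"

lemma measure_linear_image_compact:
  fixes f :: "'a::euclidean_space \<Rightarrow> 'a"
  assumes "linear f" "compact S"
  shows "measure lebesgue (f ` S) = volume_factor f * measure lebesgue S"
proof -
  obtain c where c: "\<And>S. compact S \<Longrightarrow> measure lebesgue (f ` S) = c * measure lebesgue S"
    using measure_linear_image_proportional[OF assms(1)] by blast
  have "volume_factor f = c"
    using c[of "cbox 0 One"] by (simp add: volume_factor_def)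
  then show ?thesis
    using c[OF assms(2)] by simp
qed

lemma volume_factor_nonneg: "volume_factor f \<ge> 0"
  by (simp add: volume_factor_def)

lemma volume_factor_id: "volume_factor id = 1"
  by (simp add: volume_factor_def)

lemma volume_factor_compose:
  fixes f g :: "'a::euclidean_space \<Rightarrow> 'a"
  assumes "linear f" "linear g"
  shows "volume_factor (f \<circ> g) = volume_factor f * volume_factor g"
  using measure_linear_image_compact[OF assms(1) compact_linear_image[OF assms(2)], of "cbox 0 One"]
  by (simp add: volume_factor_def image_comp)

lemma volume_factor_pos_iff:
  fixes f :: "'a::euclidean_space \<Rightarrow> 'a"
  assumes "linear f"
  shows "volume_factor f > 0 \<longleftrightarrow> inj f"
proof
  assume "volume_factor f > 0"
  show "inj f"
  proof (rule ccontr)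
    assume "\<not> inj f"
    then have "negligible (f ` cbox 0 One)"
      by (rule negligible_linear_singular_image[OF assms])
    then show False
      using \<open>volume_factor f > 0\<close> by (simp add: volume_factor_def negligible_imp_measure0)
  qed
next
  assume "inj f"
  then obtain g where "linear g" "g \<circ> f = id"
    using linear_injective_left_inverse[OF assms] by blast
  then have "volume_factor g * volume_factor f = 1"
    by (metis assms volume_factor_compose volume_factor_id)
  then show "volume_factor f > 0"
    using volume_factor_nonneg[of f] by (metis less_eq_real_def mult_zero_right zero_neq_one)
qed

lemma volume_factor_conjugate:
  fixes f g h :: "'a::euclidean_space \<Rightarrow> 'a"
  assumes "linear f" "linear g" "linear h" "g \<circ> h = id"
  shows "volume_factor (h \<circ> f \<circ> g) = volume_factor f"
proof -
  have "volume_factor (h \<circ> f \<circ> g) = volume_factor f * (volume_factor g * volume_factor h)"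
    using assms by (simp add: volume_factor_compose linear_compose)
  also have "volume_factor g * volume_factor h = 1"
    using assms by (metis volume_factor_compose volume_factor_id)
  finally show ?thesis by (metis mult_1_right)
qed

lemma vol_ellipsoid:
  fixes A :: "'a::euclidean_space \<Rightarrow> 'a"
  assumes "linear A"
  shows "vol ((\<lambda>x. c + A x) ` cball 0 1) = volume_factor A * vol (cball 0 (1::real) :: 'a set)"
proof -
  have "(\<lambda>x. c + A x) ` cball 0 1 = (+) c ` A ` cball 0 1"
    by (simp add: image_image)
  then show ?thesis
    using measure_linear_image_compact[OF assms compact_cball]
    by (simp add: vol_def measure_translation)
qed

definition stretch_along :: "'a::real_inner \<Rightarrow> real \<Rightarrow> real \<Rightarrow> 'a \<Rightarrow> 'a" where
  "stretch_along w a b x = (a * (x \<bullet> w)) *\<^sub>R w + b *\<^sub>R (x - (x \<bullet> w) *\<^sub>R w)"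

lemma linear_stretch_along: "linear (stretch_along w a b)"
  by (rule linearI) (auto simp: stretch_along_def inner_add_left algebra_simps)

definition reflect_along :: "'a::real_inner \<Rightarrow> 'a \<Rightarrow> 'a" where
  "reflect_along v x = x - (2 * (x \<bullet> v) / (v \<bullet> v)) *\<^sub>R v"

lemma linear_reflect_along: "linear (reflect_along v)"
  by (rule linearI) (auto simp: reflect_along_def inner_add_left add_divide_distrib algebra_simps)

lemma inner_reflect_along: "reflect_along v x \<bullet> y = x \<bullet> reflect_along v y"
  by (simp add: reflect_along_def inner_diff_left inner_diff_right inner_commute)

lemma reflect_along_involution: "reflect_along v \<circ> reflect_along v = id"
proof (cases "v = 0")
  case False
  then show ?thesis
    by (auto simp: reflect_along_def fun_eq_iff inner_diff_left algebra_simps)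
qed (simp add: reflect_along_def fun_eq_iff)

lemma reflect_along_diff:
  assumes "norm e = norm w"
  shows "reflect_along (e - w) e = w"
proof (cases "e = w")
  case False
  have "e \<bullet> e = w \<bullet> w"
    using assms by (metis power2_norm_eq_inner)
  then have "(e - w) \<bullet> (e - w) = 2 * (e \<bullet> (e - w))"
    by (simp add: inner_diff_left inner_diff_right inner_commute)
  moreover have "(e - w) \<bullet> (e - w) \<noteq> 0"
    using False by simp
  ultimately show ?thesis
    by (simp add: reflect_along_def)
qed (simp add: reflect_along_def)

lemma volume_factor_stretch_along_Basis:
  fixes e :: "'a::euclidean_space"
  assumes e: "e \<in> Basis"
  shows "volume_factor (stretch_along e a b) = \<bar>a * b ^ (DIM('a) - 1)\<bar>"
proof -
  define m where "m k = (if k = e then a else b)" for k :: 'a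
  have diagonal: "stretch_along e a b = (\<lambda>x. \<Sum>k\<in>Basis. (m k * (x \<bullet> k)) *\<^sub>R k)"
  proof
    fix x :: 'a
    have "(\<Sum>k\<in>Basis. (m k * (x \<bullet> k)) *\<^sub>R k)
        = (\<Sum>k\<in>Basis. b *\<^sub>R ((x \<bullet> k) *\<^sub>R k) + (if k = e then ((a - b) * (x \<bullet> k)) *\<^sub>R k else 0))"
      by (rule sum.cong) (auto simp: m_def algebra_simps)
    also have "\<dots> = b *\<^sub>R (\<Sum>k\<in>Basis. (x \<bullet> k) *\<^sub>R k) + ((a - b) * (x \<bullet> e)) *\<^sub>R e"
      using e by (simp add: sum.distrib scaleR_sum_right)
    also have "\<dots> = b *\<^sub>R x + ((a - b) * (x \<bullet> e)) *\<^sub>R e"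
      by (simp add: euclidean_representation)
    finally show "stretch_along e a b x = (\<Sum>k\<in>Basis. (m k * (x \<bullet> k)) *\<^sub>R k)"
      by (simp add: stretch_along_def algebra_simps)
  qed
  have "(\<Prod>k\<in>Basis. m k) = a * b ^ (DIM('a) - 1)"
    using e by (simp add: prod.remove m_def card_Diff_singleton)
  moreover have "volume_factor (stretch_along e a b) = \<bar>\<Prod>k\<in>Basis. m k\<bar>"
    using content_image_stretch_interval[of m 0 One]
    by (simp add: volume_factor_def diagonal measure_completion borel_compact
        compact_linear_image[OF linear_stretch_along[of e a b, unfolded diagonal]])
  ultimately show ?thesis by simp
qed

lemma volume_factor_stretch_along:
  fixes w :: "'a::euclidean_space"
  assumes "norm w = 1"
  shows "volume_factor (stretch_along w a b) = \<bar>a * b ^ (DIM('a) - 1)\<bar>"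
proof -
  obtain e :: 'a where e: "e \<in> Basis"
    using nonempty_Basis by blast
  define R where "R = reflect_along (e - w)"
  have Re: "R e = w"
    using assms e by (simp add: R_def reflect_along_diff)
  have "stretch_along w a b = R \<circ> stretch_along e a b \<circ> R"
  proof
    fix x
    have "R x \<bullet> e = x \<bullet> w"
      using Re by (simp add: R_def inner_reflect_along)
    then show "stretch_along w a b x = (R \<circ> stretch_along e a b \<circ> R) x"
      using reflect_along_involution[of "e - w"] linear_reflect_along[of "e - w"]
      by (simp add: stretch_along_def R_def linear_add linear_scale linear_diff Re[unfolded R_def] fun_eq_iff)
  qed
  then have "volume_factor (stretch_along w a b) = volume_factor (stretch_along e a b)"
    unfolding R_def
    by (simp add: volume_factor_conjugate linear_stretch_along linear_reflect_along reflect_along_involution)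
  then show ?thesis
    using volume_factor_stretch_along_Basis[OF e] by simp
qed

lemma orthogonal_sum_mem_cball:
  fixes w y :: "'a::real_inner"
  assumes "norm w = 1" "y \<bullet> w = 0" "t\<^sup>2 + y \<bullet> y \<le> 1"
  shows "t *\<^sub>R w + y \<in> cball 0 1"
proof -
  have "(t *\<^sub>R w + y) \<bullet> (t *\<^sub>R w + y) = t\<^sup>2 + y \<bullet> y"
    using assms(1,2) by (simp add: inner_add_left inner_add_right inner_commute[of w y] norm_eq_1
        power2_eq_square)
  then show ?thesis
    using assms(3) by (simp add: norm_eq_sqrt_inner)
qed

lemma spike_combination_mem_convex_hull:
  fixes w y :: "'a::real_inner"
  assumes w: "norm w = 1" and yw: "y \<bullet> w = 0" and \<mu>: "0 < \<mu>" "\<mu> \<le> 1"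
    and bound: "b\<^sup>2 * (y \<bullet> y) \<le> \<mu>\<^sup>2 * (1 - 1 / L\<^sup>2)"
  shows "(\<mu> / L + (1 - \<mu>) * L) *\<^sub>R w + b *\<^sub>R y \<in> convex hull (cball 0 1 \<union> {L *\<^sub>R w})"
proof -
  define p where "p = (1 / L) *\<^sub>R w + (b / \<mu>) *\<^sub>R y"
  have "(b / \<mu>)\<^sup>2 * (y \<bullet> y) \<le> 1 - 1 / L\<^sup>2"
    using bound \<mu> by (simp add: power_divide field_simps)
  moreover have "((b / \<mu>) *\<^sub>R y) \<bullet> ((b / \<mu>) *\<^sub>R y) = (b / \<mu>)\<^sup>2 * (y \<bullet> y)"
    by (simp add: power2_eq_square)
  ultimately have "p \<in> cball 0 1"
    unfolding p_def using yw by (intro orthogonal_sum_mem_cball[OF w]) (simp_all add: power_divide)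
  then have "\<mu> *\<^sub>R p + (1 - \<mu>) *\<^sub>R (L *\<^sub>R w) \<in> convex hull (cball 0 1 \<union> {L *\<^sub>R w})"
    using \<mu> by (intro convexD[OF convex_convex_hull]) (auto intro: hull_inc)
  moreover have "\<mu> *\<^sub>R p + (1 - \<mu>) *\<^sub>R (L *\<^sub>R w) = (\<mu> / L + (1 - \<mu>) * L) *\<^sub>R w + b *\<^sub>R y"
    using \<mu> by (simp add: p_def algebra_simps)
  ultimately show ?thesis
    by simp
qed

lemma stretched_point_mem_spike_hull:
  fixes w y :: "'a::real_inner"
  assumes w: "norm w = 1" and yw: "y \<bullet> w = 0"
    and s: "2 * s * L > 1" "s \<le> 1" and L: "L \<ge> 2"
    and bound: "b\<^sup>2 * (y \<bullet> y) * (L\<^sup>2 - 1) \<le> (L\<^sup>2 - 4) * (1 - s\<^sup>2)"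
  shows "(2 * s) *\<^sub>R w + b *\<^sub>R y \<in> convex hull (cball 0 1 \<union> {L *\<^sub>R w})"
proof -
  have "2 * 2 \<le> L * L"
    using L by (intro mult_mono) auto
  then have L1: "L\<^sup>2 - 1 > 0"
    by (simp add: power2_eq_square)
  then have "L\<^sup>2 \<noteq> 1"
    by linarith
  have "(L - 2 * s)\<^sup>2 - (L\<^sup>2 - 4) * (1 - s\<^sup>2) = (L * s - 2)\<^sup>2"
    by (simp add: power2_eq_square algebra_simps)
  then have tangent: "b\<^sup>2 * (y \<bullet> y) * (L\<^sup>2 - 1) \<le> (L - 2 * s)\<^sup>2"
    using bound zero_le_power2[of "L * s - 2"] by linarith
  show ?thesis
  proof (cases "L = 2 * s")
    case True
    then have "b\<^sup>2 * (y \<bullet> y) \<le> 0"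
      using tangent L1 by (simp add: mult_le_0_iff)
    then have "y \<bullet> y \<le> 0 \<or> b = 0"
      by (simp add: mult_le_0_iff)
    then have "b *\<^sub>R y = 0"
      by (metis inner_ge_zero inner_eq_zero_iff order_antisym scaleR_eq_0_iff)
    then show ?thesis
      using True by (simp add: hull_inc)
  next
    case False
    define \<mu> where "\<mu> = L * (L - 2 * s) / (L\<^sup>2 - 1)"
    have \<mu>: "0 < \<mu>" "\<mu> \<le> 1"
      using False s L L1 by (auto simp: \<mu>_def field_simps power2_eq_square)
    have "L - 2 * s = \<mu> * (L\<^sup>2 - 1) / L"
      using L by (simp add: \<mu>_def \<open>L\<^sup>2 \<noteq> 1\<close>)
    then have "\<mu> / L + (1 - \<mu>) * L = 2 * s"
      using L by (simp add: field_simps power2_eq_square)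
    have "b\<^sup>2 * (y \<bullet> y) \<le> (L - 2 * s)\<^sup>2 / (L\<^sup>2 - 1)"
      using tangent by (simp add: pos_le_divide_eq[OF L1])
    also have "\<dots> = \<mu>\<^sup>2 * ((L\<^sup>2 - 1) / L\<^sup>2)"
      using L \<open>L\<^sup>2 \<noteq> 1\<close> \<open>L - 2 * s = \<mu> * (L\<^sup>2 - 1) / L\<close>
      by (simp add: power_divide power_mult_distrib power2_eq_square)
    also have "(L\<^sup>2 - 1) / L\<^sup>2 = 1 - 1 / L\<^sup>2"
      using L by (simp add: diff_divide_distrib)
    finally have "b\<^sup>2 * (y \<bullet> y) \<le> \<mu>\<^sup>2 * (1 - 1 / L\<^sup>2)" .
    from spike_combination_mem_convex_hull[OF w yw \<mu> this] show ?thesis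
      unfolding \<open>\<mu> / L + (1 - \<mu>) * L = 2 * s\<close> .
  qed
qed

lemma stretched_point_mem_cball:
  fixes w y :: "'a::real_inner"
  assumes w: "norm w = 1" and yw: "y \<bullet> w = 0"
    and s: "\<bar>2 * s * L\<bar> \<le> 1" and L: "L \<ge> 2"
    and bound: "b\<^sup>2 * (y \<bullet> y) * (L\<^sup>2 - 1) \<le> (L\<^sup>2 - 4) * (1 - s\<^sup>2)"
  shows "(2 * s) *\<^sub>R w + b *\<^sub>R y \<in> cball 0 1"
proof -
  have "2 * 2 \<le> L * L"
    using L by (intro mult_mono) auto
  then have L1: "L\<^sup>2 - 1 > 0"
    by (simp add: power2_eq_square)
  have "(2 * s * L)\<^sup>2 \<le> 1"
    using s by (simp only: abs_square_le_1)
  then have "4 * (s\<^sup>2 * L\<^sup>2) \<le> 1"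
    by (simp add: power_mult_distrib mult.assoc)
  have "(4 * s\<^sup>2 + b\<^sup>2 * (y \<bullet> y)) * (L\<^sup>2 - 1)
      = 4 * s\<^sup>2 * (L\<^sup>2 - 1) + b\<^sup>2 * (y \<bullet> y) * (L\<^sup>2 - 1)"
    by (simp add: algebra_simps)
  also have "\<dots> \<le> 4 * s\<^sup>2 * (L\<^sup>2 - 1) + (L\<^sup>2 - 4) * (1 - s\<^sup>2)"
    using bound by linarith
  also have "\<dots> = 3 * (s\<^sup>2 * L\<^sup>2) + L\<^sup>2 - 4"
    by (simp add: algebra_simps)
  also have "\<dots> \<le> 1 * (L\<^sup>2 - 1)"
    using \<open>4 * (s\<^sup>2 * L\<^sup>2) \<le> 1\<close> by simp
  finally have "4 * s\<^sup>2 + b\<^sup>2 * (y \<bullet> y) \<le> 1"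
    by (rule mult_right_le_imp_le) (use L1 in linarith)
  then show ?thesis
    using yw by (intro orthogonal_sum_mem_cball[OF w]) (auto simp: power_mult_distrib power2_eq_square)
qed

lemma stretch_along_orthogonal_split:
  fixes w x :: "'a::real_inner"
  assumes "norm w = 1"
  obtains y where "y \<bullet> w = 0" "y \<bullet> y = x \<bullet> x - (x \<bullet> w)\<^sup>2"
    "stretch_along w a b x = (a * (x \<bullet> w)) *\<^sub>R w + b *\<^sub>R y"
proof
  have ww: "w \<bullet> w = 1"
    using assms by (simp add: norm_eq_1)
  show "(x - (x \<bullet> w) *\<^sub>R w) \<bullet> w = 0"
    by (simp add: inner_diff_left ww)
  show "(x - (x \<bullet> w) *\<^sub>R w) \<bullet> (x - (x \<bullet> w) *\<^sub>R w) = x \<bullet> x - (x \<bullet> w)\<^sup>2"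
    by (simp add: inner_diff_left inner_diff_right inner_commute ww power2_eq_square)
qed (simp add: stretch_along_def)

lemma stretch_along_cball_subset_convex_hull:
  fixes w :: "'a::real_inner"
  assumes w: "norm w = 1" and L: "L \<ge> 2" and b: "b\<^sup>2 * (L\<^sup>2 - 1) = L\<^sup>2 - 4"
  shows "stretch_along w 2 b ` cball 0 1 \<subseteq> convex hull (cball 0 1 \<union> {L *\<^sub>R w, - (L *\<^sub>R w)})"
proof
  fix z
  assume "z \<in> stretch_along w 2 b ` cball 0 1"
  then obtain x where x: "x \<bullet> x \<le> 1" and z: "z = stretch_along w 2 b x"
    by (auto simp: norm_eq_sqrt_inner)
  define s where "s = x \<bullet> w"
  obtain y where yw: "y \<bullet> w = 0" and yy: "y \<bullet> y = x \<bullet> x - s\<^sup>2" and z: "z = (2 * s) *\<^sub>R w + b *\<^sub>R y"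
    using stretch_along_orthogonal_split[OF w, of x 2 b] by (auto simp: z s_def)
  have "2 * 2 \<le> L * L"
    using L by (intro mult_mono) auto
  then have "(L\<^sup>2 - 4) * (y \<bullet> y) \<le> (L\<^sup>2 - 4) * (1 - s\<^sup>2)"
    using x yy by (intro mult_left_mono) (auto simp: power2_eq_square)
  then have bound: "b\<^sup>2 * (y \<bullet> y) * (L\<^sup>2 - 1) \<le> (L\<^sup>2 - 4) * (1 - s\<^sup>2)"
    by (metis b mult.commute mult.left_commute)
  have "s\<^sup>2 \<le> 1"
    using x yy inner_ge_zero[of y] by linarith
  then have s: "\<bar>s\<bar> \<le> 1"
    by (simp add: abs_square_le_1)
  consider "2 * s * L > 1" | "2 * (- s) * L > 1" | "\<bar>2 * s * L\<bar> \<le> 1"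
    by linarith
  then show "z \<in> convex hull (cball 0 1 \<union> {L *\<^sub>R w, - (L *\<^sub>R w)})"
  proof cases
    case 1
    then have "z \<in> convex hull (cball 0 1 \<union> {L *\<^sub>R w})"
      unfolding z using s by (intro stretched_point_mem_spike_hull[OF w yw _ _ L bound]) auto
    then show ?thesis
      by (rule subsetD[OF hull_mono, rotated]) auto
  next
    case 2
    have "(2 * - s) *\<^sub>R - w + b *\<^sub>R y \<in> convex hull (cball 0 1 \<union> {L *\<^sub>R - w})"
      using w yw s bound by (intro stretched_point_mem_spike_hull[OF _ _ 2 _ L]) auto
    then have "z \<in> convex hull (cball 0 1 \<union> {- (L *\<^sub>R w)})"
      by (simp add: z)
    then show ?thesis
      by (rule subsetD[OF hull_mono, rotated]) auto
  next
    case 3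
    then have "z \<in> cball 0 1"
      unfolding z by (rule stretched_point_mem_cball[OF w yw _ L bound])
    then show ?thesis
      by (intro hull_inc) simp
  qed
qed

lemma two_sqrt_ratio_power_ge:
  fixes m :: nat
  shows "13 / 10 \<le> 2 * sqrt (4 * real m / (4 * real m + 3)) ^ m"
proof -
  have "(169 / 400 :: real) \<le> (4 * real m / (4 * real m + 3)) ^ m"
  proof (cases "m = 0")
    case False
    define t where "t = 3 / (4 * real m)"
    have "exp (3 / 16 :: real) \<le> 16 / 13"
      using exp_ge_add_one_self[of "- 3 / 16 :: real"] by (simp add: exp_minus field_simps)
    then have "exp (3 / 16 :: real) ^ 4 \<le> (16 / 13) ^ 4"
      by (intro power_mono) auto
    moreover have "(1 + t) ^ m \<le> exp t ^ m"
      using exp_ge_add_one_self[of t] by (intro power_mono) (auto simp: t_def)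
    moreover have "exp t ^ m = exp (3 / 16 :: real) ^ 4"
      using False by (simp add: t_def flip: exp_of_nat_mult)
    ultimately have "(1 + t) ^ m \<le> (16 / 13) ^ 4"
      by linarith
    then have "(13 / 16) ^ 4 \<le> 1 / (1 + t) ^ m"
      using False by (simp add: t_def field_simps power_divide)
    moreover have "1 / (1 + t) ^ m = (4 * real m / (4 * real m + 3)) ^ m"
      using False by (simp add: t_def field_simps power_one_over)
    ultimately show ?thesis
      by (simp add: power_divide)
  qed simp
  then have "sqrt (169 / 400) \<le> sqrt ((4 * real m / (4 * real m + 3)) ^ m)"
    by (rule real_sqrt_le_mono)
  moreover have "sqrt (169 / 400 :: real) = 13 / 20"
    by (simp add: real_sqrt_divide)
  ultimately show ?thesis
    by (simp add: real_sqrt_power)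
qed

lemma frontier_injective_linear_image:
  fixes f :: "'a::euclidean_space \<Rightarrow> 'a"
  assumes "linear f" "inj f"
  shows "frontier (f ` S) = f ` frontier S"
  using assms
  by (simp add: frontier_def interior_injective_linear_image image_set_diff
      flip: closure_injective_linear_image)

lemma is_ellipsoid_linear_image:
  fixes A :: "'a::euclidean_space \<Rightarrow> 'a"
  assumes "linear A" "inj A"
  shows "is_ellipsoid (A ` cball 0 1)"
  unfolding is_ellipsoid_def using assms by (intro exI[of _ 0] exI[of _ A]) simp

lemma vol_linear_image_cball_pos:
  fixes A :: "'a::euclidean_space \<Rightarrow> 'a"
  assumes "linear A" "inj A"
  shows "vol (A ` cball 0 1) > 0"
  using vol_ellipsoid[OF assms(1), of 0] volume_factor_pos_iff[OF assms(1)] assms(2)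
  by (simp add: vol_def)

lemma max_vol_ellipsoid_ge_linear_image:
  fixes A T :: "'a::euclidean_space \<Rightarrow> 'a"
  assumes max: "max_vol_ellipsoid K E" and A: "linear A" "inj A"
    and T: "linear T" "volume_factor T > 0" and sub: "A ` T ` cball 0 1 \<subseteq> K"
  shows "volume_factor T * vol (A ` cball 0 1) \<le> vol E"
proof -
  have linear_AT: "linear (A \<circ> T)"
    using A(1) T(1) by (rule linear_compose[rotated])
  have factor: "volume_factor (A \<circ> T) = volume_factor A * volume_factor T"
    by (rule volume_factor_compose[OF A(1) T(1)])
  then have "inj (A \<circ> T)"
    using A T(2) by (simp add: volume_factor_pos_iff[OF linear_AT, symmetric] volume_factor_pos_iff)
  then have "vol ((A \<circ> T) ` cball 0 1) \<le> vol E"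
    using max sub is_ellipsoid_linear_image[OF linear_AT] by (simp add: max_vol_ellipsoid_def image_comp)
  moreover have "vol ((A \<circ> T) ` cball 0 1) = volume_factor T * vol (A ` cball 0 1)"
    using vol_ellipsoid[OF linear_AT, of 0] vol_ellipsoid[OF A(1), of 0] by (simp add: factor)
  ultimately show ?thesis
    by simp
qed

lemma sheared_ellipsoid_subset:
  fixes K :: "'a::euclidean_space set" and w :: 'a
  assumes K: "convex K" "origin_symmetric K" and A: "linear A"
    and E: "(\<lambda>x. c + A x) ` cball 0 1 \<subseteq> K" and w: "norm w \<le> 1"
  shows "(\<lambda>x. A x + (x \<bullet> w) *\<^sub>R c) ` cball 0 1 \<subseteq> K"
proof clarify
  fix x :: 'a
  assume x: "x \<in> cball 0 1"
  define s where "s = x \<bullet> w"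
  have s: "\<bar>s\<bar> \<le> 1"
    using Cauchy_Schwarz_ineq2[of x w] x w mult_mono[of "norm x" 1 "norm w" 1]
    by (simp add: s_def)
  have "c + A x \<in> K" "c + A (- x) \<in> K"
    using E x by auto
  then have "c + A x \<in> K" "A x - c \<in> K"
    using K(2) A by (auto simp: origin_symmetric_def linear_neg dest!: bspec[of _ _ "c + A (- x)"])
  then have "((1 + s) / 2) *\<^sub>R (c + A x) + ((1 - s) / 2) *\<^sub>R (A x - c) \<in> K"
    by (rule convexD[OF K(1)]) (use s in \<open>auto simp: field_simps\<close>)
  moreover have "((1 + s) / 2) *\<^sub>R (c + A x) + ((1 - s) / 2) *\<^sub>R (A x - c)
      = ((1 + s) / 2 + (1 - s) / 2) *\<^sub>R A x + ((1 + s) / 2 - (1 - s) / 2) *\<^sub>R c"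
    by (simp add: algebra_simps)
  moreover have "\<dots> = A x + s *\<^sub>R c"
    by (simp add: field_simps)
  ultimately show "A x + (x \<bullet> w) *\<^sub>R c \<in> K"
    by (simp add: s_def)
qed

lemma linear_image_stretch_subset_convex_hull:
  fixes A :: "'a::euclidean_space \<Rightarrow> 'a"
  assumes A: "linear A" "A ` cball 0 1 \<subseteq> K" and w: "norm w = 1"
    and L: "L \<ge> 2" and b: "b\<^sup>2 * (L\<^sup>2 - 1) = L\<^sup>2 - 4"
  shows "A ` stretch_along w 2 b ` cball 0 1 \<subseteq> convex hull (K \<union> {L *\<^sub>R A w, - (L *\<^sub>R A w)})"
proof -
  have "A ` stretch_along w 2 b ` cball 0 1 \<subseteq> A ` (convex hull (cball 0 1 \<union> {L *\<^sub>R w, - (L *\<^sub>R w)}))"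
    using stretch_along_cball_subset_convex_hull[OF w L b] by (rule image_mono)
  also have "\<dots> = convex hull (A ` cball 0 1 \<union> {L *\<^sub>R A w, - (L *\<^sub>R A w)})"
    by (simp add: convex_hull_linear_image[OF A(1)] linear_scale[OF A(1)] linear_neg[OF A(1)])
  also have "\<dots> \<subseteq> convex hull (K \<union> {L *\<^sub>R A w, - (L *\<^sub>R A w)})"
    using A(2) by (intro hull_mono) auto
  finally show ?thesis .
qed

lemma max_vol_ellipsoid_centered:
  fixes K E :: "'a::euclidean_space set"
  assumes K: "convex K" "origin_symmetric K" and max: "max_vol_ellipsoid K E"
  obtains A :: "'a \<Rightarrow> 'a" where "linear A" "inj A" "E = A ` cball 0 1"
proof -
  have "is_ellipsoid E" "E \<subseteq> K"
    using max by (simp_all add: max_vol_ellipsoid_def)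
  then obtain c and A :: "'a \<Rightarrow> 'a" where A: "linear A" "inj A"
    and E: "E = (\<lambda>x. c + A x) ` cball 0 1"
    unfolding is_ellipsoid_def by blast
  obtain c' where c: "c = A c'"
    using linear_injective_imp_surjective[OF A] unfolding surj_def by blast
  have vol_E: "vol E = vol (A ` cball 0 1)"
    using vol_ellipsoid[OF A(1), of c] vol_ellipsoid[OF A(1), of 0] by (simp add: E)
  have "c' = 0"
  proof (rule ccontr)
    assume "c' \<noteq> 0"
    define d where "d = norm c'"
    define w where "w = c' /\<^sub>R d"
    define T where "T = stretch_along w (1 + d) 1"
    have d: "d > 0" and w: "norm w = 1" and c': "c' = d *\<^sub>R w"
      using \<open>c' \<noteq> 0\<close> by (auto simp: d_def w_def)
    have "A (T x) = A x + (x \<bullet> w) *\<^sub>R c" for x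
      by (simp add: T_def stretch_along_def c c' algebra_simps linear_add[OF A(1)] linear_scale[OF A(1)])
    then have "A ` T ` cball 0 1 \<subseteq> K"
      using sheared_ellipsoid_subset[OF K A(1), of c w] \<open>E \<subseteq> K\<close> w by (simp add: E image_image)
    moreover have "volume_factor T = 1 + d"
      using d by (simp add: T_def volume_factor_stretch_along[OF w])
    ultimately have "(1 + d) * vol (A ` cball 0 1) \<le> vol E"
      using max_vol_ellipsoid_ge_linear_image[OF max A, of T] d
      by (simp add: T_def linear_stretch_along)
    then show False
      using mult_pos_pos[OF d vol_linear_image_cball_pos[OF A]] by (simp add: vol_E algebra_simps)
  qed
  with A E c show thesis
    by (intro that[of A]) (simp_all add: linear_0)
qed

theorem lemma4:
  fixes K E E' :: "'a::euclidean_space set" and u :: 'a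
  assumes "convex_body K" and "origin_symmetric K"
    and "max_vol_ellipsoid K E"
    and "u \<in> frontier E"
    and "max_vol_ellipsoid
           (convex hull (K \<union> {(2 * sqrt (real DIM('a))) *\<^sub>R u, - ((2 * sqrt (real DIM('a))) *\<^sub>R u)})) E'"
  shows "vol E' / vol E \<ge> 13 / 10"
proof -
  define m where "m = DIM('a) - 1"
  define b where "b = sqrt (4 * real m / (4 * real m + 3))"
  obtain A :: "'a \<Rightarrow> 'a" where A: "linear A" "inj A" and E: "E = A ` cball 0 1"
    using max_vol_ellipsoid_centered assms(1-3) unfolding convex_body_def by metis
  obtain w where w: "norm w = 1" and u: "u = A w"
    using assms(4) by (auto simp: E frontier_injective_linear_image[OF A])
  define T where "T = stretch_along w 2 b"
  have "volume_factor T = 2 * b ^ m"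
    unfolding T_def volume_factor_stretch_along[OF w] m_def by (simp add: b_def)
  then have ratio: "13 / 10 \<le> volume_factor T"
    using two_sqrt_ratio_power_ge[of m] by (simp add: b_def)
  have dim: "real DIM('a) = real m + 1"
    using DIM_positive[where 'a='a] by (simp add: m_def of_nat_diff)
  have "A ` T ` cball 0 1
      \<subseteq> convex hull (K \<union> {(2 * sqrt (real DIM('a))) *\<^sub>R u, - ((2 * sqrt (real DIM('a))) *\<^sub>R u)})"
    unfolding T_def u using assms(3) E
    by (intro linear_image_stretch_subset_convex_hull[OF A(1) _ w])
       (auto simp: max_vol_ellipsoid_def b_def dim power_mult_distrib field_simps)
  then have "volume_factor T * vol E \<le> vol E'"
    using max_vol_ellipsoid_ge_linear_image[OF assms(5) A] ratio
    by (simp add: E T_def linear_stretch_along)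
  moreover have "vol E > 0"
    using vol_linear_image_cball_pos[OF A] by (simp add: E)
  ultimately have "13 / 10 * vol E \<le> vol E'"
    using mult_right_mono[OF ratio, of "vol E"] by linarith
  with \<open>vol E > 0\<close> show ?thesis
    by (simp add: le_divide_eq)
qed

end
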